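(* Let $(G,w)$ be a weighted trigraph and let $(A,B,C)$ be a cut-partition of $G$ such that $C=\{c_1,c_2\}$ is a stable set of size two of $G$. For each $X\in\{A,B\}$ let $G_X$ be the trigraph on $X\cup C$ in which $c_1c_2$ is semi-adjacent and all other adjacencies are as in $G[X\cup C]$. For every $C'\subseteq C$ set $\alpha_{A\cup C'}=\alpha(\mathrm{Red}[G_A,w;A\cup C'])+\mathrm{Ext}[G_A,w;A\cup C']$. Define $w_B:D(G_B)\to\mathbb N$ by $w_B(c_1)=\alpha_{A\cup C}-w(c_2)$, $w_B(c_2)=w(c_2)$, $w_B(c_1,c_2)=\alpha_{A\cup\{c_1\}}-\alpha_{A\cup C}+w(c_2)$, $w_B(c_2,c_1)=\alpha_{A\cup\{c_2\}}-w(c_2)$, $w_B(c_1c_2)=\alpha_A$, and $w_B(p)=w(p)$ for all $p\in D(G_B)\setminus D(G_B[C])$. Then $w_B$ is a weight function for $G_B$ (in particular all these values are non-negative), and $\alpha(G_B,w_B)=\alpha(G,w)$.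
   Context: A trigraph $G$ consists of a finite vertex set $V(G)$ and an adjacency function $\theta_G:\binom{V(G)}{2}\to\{-1,0,1\}$; for distinct $u,v$ write $uv$ for $\{u,v\}$. The pair $uv$ is strongly adjacent if $\theta_G(uv)=1$, semi-adjacent if $\theta_G(uv)=0$, strongly anti-adjacent if $\theta_G(uv)=-1$; $u,v$ are anti-adjacent if $\theta_G(uv)\le 0$. A stable set is a set of pairwise anti-adjacent vertices. For $X\subseteq V(G)$, $G[X]$ is the trigraph on $X$ with the restricted adjacency function. A cut-partition of $G$ is a partition $(A,B,C)$ of $V(G)$ with $A,B$ non-empty ($C$ possibly empty) such that every vertex of $A$ is strongly anti-adjacent to every vertex of $B$. $\mathbb N$ denotes the non-negative integers. For a trigraph $G$ let $D(G)=V(G)\cup\{(u,v):u,v\in V(G),u\neq v\}\cup\binom{V(G)}{2}$. A weight function for $G$ is a map $w:D(G)\to\mathbb N$ such that for all distinct $u,v$: if $uv$ is not semi-adjacent then $w(u,v)=w(v,u)=w(uv)=0$, and $w(u,v)\le w(uv)$. A weighted trigraph is a pair $(G,w)$ with $w$ a weight function for $G$; for an induced subtrigraph $H$, $(H,w)$ denotes $(H,w|_{D(H)})$; note $w$ restricted to $D(G_A)$ is a weight function for $G_A$. The weight of $S\subseteq V(G)$ is $\llbracket S\rrbracket_{(G,w)}=\sum_{u\in S}w(u)+\sum_{u\in S}\sum_{v\in V(G)\setminus S}w(u,v)+\sum_{uv\in\binom{V(G)\setminus S}{2}}w(uv)$, and $\alpha(G,w)=\max\{\llbracket S\rrbracket_{(G,w)}: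 S \text{ a stable set of } G\}$. For $R\subseteq V(G)$, the reduction $\mathrm{Red}[G,w;R]$ is the weighted trigraph $(G[R],w')$ where $w'(u)=\max\{w(u)-\sum_{v\in V(G)\setminus R}(w(uv)-w(u,v)),0\}$ for $u\in R$, and $w'(u,v)=w(u,v)$, $w'(uv)=w(uv)$ for distinct $u,v\in R$. The exterior weight is $\mathrm{Ext}[G,w;R]=\sum_{uv\in\binom{V(G)\setminus R}{2}}w(uv)+\sum_{u\in R}\sum_{v\in V(G)\setminus R}w(uv)$. *)

theory Defs
  imports Main
begin

(* A trigraph: finite vertex set together with an adjacency function on
   2-element subsets {u,v} of the vertex set with values in {-1,0,1}. *)
type_synonym 'a trigraph = "'a set \<times> ('a set \<Rightarrow> int)"

definition verts :: "'a trigraph \<Rightarrow> 'a set" where "verts G = fst G"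
definition theta :: "'a trigraph \<Rightarrow> 'a \<Rightarrow> 'a \<Rightarrow> int" where "theta G u v = snd G {u, v}"

definition is_trigraph :: "'a trigraph \<Rightarrow> bool" where
  "is_trigraph G \<longleftrightarrow> finite (verts G) \<and>
     (\<forall>u\<in>verts G. \<forall>v\<in>verts G. u \<noteq> v \<longrightarrow> theta G u v \<in> {-1, 0, 1})"

definition binom2 :: "'a set \<Rightarrow> 'a set set" where
  "binom2 X = {e. e \<subseteq> X \<and> card e = 2}"

definition induced :: "'a trigraph \<Rightarrow> 'a set \<Rightarrow> 'a trigraph" where
  "induced G X = (X, snd G)"

definition stable :: "'a trigraph \<Rightarrow> 'a set \<Rightarrow> bool" where
  "stable G S \<longleftrightarrow> S \<subseteq> verts G \<and> (\<forall>u\<in>S. \<forall>v\<in>S. u \<noteq> v \<longrightarrow> theta G u v \<le> 0)"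

definition cut_partition :: "'a trigraph \<Rightarrow> 'a set \<Rightarrow> 'a set \<Rightarrow> 'a set \<Rightarrow> bool" where
  "cut_partition G A B C \<longleftrightarrow> A \<union> B \<union> C = verts G \<and> A \<inter> B = {} \<and> A \<inter> C = {} \<and>
     B \<inter> C = {} \<and> A \<noteq> {} \<and> B \<noteq> {} \<and> (\<forall>a\<in>A. \<forall>b\<in>B. theta G a b = -1)"

(* Elements of D(G): vertices, ordered pairs (u,v), unordered pairs {u,v} *)
datatype 'a delem = DV 'a | DO 'a 'a | DU "'a set"

definition Dset :: "'a trigraph \<Rightarrow> 'a delem set" where
  "Dset G = DV ` verts G \<union> {DO u v |u v. u \<in> verts G \<and> v \<in> verts G \<and> u \<noteq> v}
            \<union> DU ` binom2 (verts G)"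

(* Weights are int-valued functions; being a weight function requires
   non-negativity (values in N) on D(G). *)
definition weight_fun :: "'a trigraph \<Rightarrow> ('a delem \<Rightarrow> int) \<Rightarrow> bool" where
  "weight_fun G w \<longleftrightarrow> (\<forall>p\<in>Dset G. w p \<ge> 0) \<and>
     (\<forall>u\<in>verts G. \<forall>v\<in>verts G. u \<noteq> v \<longrightarrow>
        (theta G u v \<noteq> 0 \<longrightarrow> w (DO u v) = 0 \<and> w (DO v u) = 0 \<and> w (DU {u, v}) = 0) \<and>
        w (DO u v) \<le> w (DU {u, v}))"

definition setweight :: "'a trigraph \<Rightarrow> ('a delem \<Rightarrow> int) \<Rightarrow> 'a set \<Rightarrow> int" where
  "setweight G w S = (\<Sum>u\<in>S. w (DV u)) + (\<Sum>u\<in>S. \<Sum>v\<in>verts G - S. w (DO u v))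
       + (\<Sum>e\<in>binom2 (verts G - S). w (DU e))"

definition alpha :: "'a trigraph \<Rightarrow> ('a delem \<Rightarrow> int) \<Rightarrow> int" where
  "alpha G w = Max (setweight G w ` {S. stable G S})"

definition red_w :: "'a trigraph \<Rightarrow> ('a delem \<Rightarrow> int) \<Rightarrow> 'a set \<Rightarrow> 'a delem \<Rightarrow> int" where
  "red_w G w R p = (case p of
      DV u \<Rightarrow> max (w (DV u) - (\<Sum>v\<in>verts G - R. w (DU {u, v}) - w (DO u v))) 0
    | _ \<Rightarrow> w p)"

definition Red :: "'a trigraph \<Rightarrow> ('a delem \<Rightarrow> int) \<Rightarrow> 'a set \<Rightarrow> 'a trigraph \<times> ('a delem \<Rightarrow> int)" where
  "Red G w R = (induced G R, red_w G w R)"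

definition Ext :: "'a trigraph \<Rightarrow> ('a delem \<Rightarrow> int) \<Rightarrow> 'a set \<Rightarrow> int" where
  "Ext G w R = (\<Sum>e\<in>binom2 (verts G - R). w (DU e))
      + (\<Sum>u\<in>R. \<Sum>v\<in>verts G - R. w (DU {u, v}))"

definition GX :: "'a trigraph \<Rightarrow> 'a set \<Rightarrow> 'a \<Rightarrow> 'a \<Rightarrow> 'a trigraph" where
  "GX G X c1 c2 = (X \<union> {c1, c2}, \<lambda>e. if e = {c1, c2} then 0 else snd G e)"

definition alphaR :: "'a trigraph \<Rightarrow> ('a delem \<Rightarrow> int) \<Rightarrow> 'a set \<Rightarrow> int" where
  "alphaR H w R = alpha (fst (Red H w R)) (snd (Red H w R)) + Ext H w R"

definition wB :: "'a trigraph \<Rightarrow> ('a delem \<Rightarrow> int) \<Rightarrow> 'a set \<Rightarrow> 'a \<Rightarrow> 'a \<Rightarrow> 'a delem \<Rightarrow> int" where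
  "wB G w A c1 c2 p =
     (let GA = GX G A c1 c2;
          aAC = alphaR GA w (A \<union> {c1, c2});
          aA1 = alphaR GA w (A \<union> {c1});
          aA2 = alphaR GA w (A \<union> {c2});
          aA  = alphaR GA w A
      in if p = DV c1 then aAC - w (DV c2)
         else if p = DV c2 then w (DV c2)
         else if p = DO c1 c2 then aA1 - aAC + w (DV c2)
         else if p = DO c2 c1 then aA2 - w (DV c2)
         else if p = DU {c1, c2} then aA
         else w p)"

end

theory Submission
  imports Defs
begin

text \<open>No weight crosses the cut, so a stable set \<open>S\<close> of \<open>G\<close> has weight
  \<open>\<lbrakk>S \<inter> (A \<union> C)\<rbrakk> + \<lbrakk>S \<inter> (B \<union> C)\<rbrakk> - \<lbrakk>S \<inter> C\<rbrakk>\<close>, and stable sets of the two sides agreeing on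
  \<open>C\<close> glue to stable sets of \<open>G\<close>. For a fixed trace \<open>C' = S \<inter> C\<close> the best \<open>A\<close>-side is
  \<open>\<alpha>\<^bsub>A\<union>C'\<^esub>\<close>, because a reduction plus its exterior weight is the largest weight of a stable
  set inside the kept vertices. The weights \<open>w\<^sub>B\<close> are chosen so that \<open>C'\<close> weighs exactly
  \<open>\<alpha>\<^bsub>A\<union>C'\<^esub>\<close> inside \<open>G\<^sub>B[C]\<close>, hence \<open>(G\<^sub>B,w\<^sub>B)\<close> maximises the same quantity as \<open>(G,w)\<close>.
  That \<open>w\<^sub>B\<close> is a weight function amounts to inequalities between the four values
  \<open>\<alpha>\<^bsub>A\<union>C'\<^esub>\<close>: deleting a vertex from the kept set costs at most its weight, and an
  exchange argument compares \<open>A \<union> {c\<^sub>1}\<close> with \<open>A\<close> and \<open>A \<union> C\<close>.\<close>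

section \<open>Weights of vertex sets\<close>

definition offdiag :: "'a set \<Rightarrow> ('a \<times> 'a) set" where
  "offdiag X = {p. fst p \<in> X \<and> snd p \<in> X \<and> fst p \<noteq> snd p}"

definition pair_weight :: "('a delem \<Rightarrow> int) \<Rightarrow> 'a set \<Rightarrow> 'a \<times> 'a \<Rightarrow> int" where
  "pair_weight w S p =
     (if fst p \<in> S \<and> snd p \<notin> S then w (DO (fst p) (snd p)) else 0)
   + (if snd p \<in> S \<and> fst p \<notin> S then w (DO (snd p) (fst p)) else 0)
   + (if fst p \<notin> S \<and> snd p \<notin> S then w (DU {fst p, snd p}) else 0)"

definition setweight_on :: "'a set \<Rightarrow> ('a delem \<Rightarrow> int) \<Rightarrow> 'a set \<Rightarrow> int" where
  "setweight_on V w S = (\<Sum>u\<in>S. w (DV u)) + (\<Sum>u\<in>S. \<Sum>v\<in>V - S. w (DO u v))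
       + (\<Sum>e\<in>binom2 (V - S). w (DU e))"

definition admissible :: "'a set \<Rightarrow> ('a delem \<Rightarrow> int) \<Rightarrow> bool" where
  "admissible V w \<longleftrightarrow> (\<forall>u\<in>V. 0 \<le> w (DV u)) \<and>
     (\<forall>u\<in>V. \<forall>v\<in>V. u \<noteq> v \<longrightarrow> 0 \<le> w (DO u v) \<and> w (DO u v) \<le> w (DU {u, v}))"

lemma setweight_eq_setweight_on: "setweight G w S = setweight_on (verts G) w S"
  by (simp add: setweight_def setweight_on_def)

lemma admissible_subset: "admissible V w \<Longrightarrow> X \<subseteq> V \<Longrightarrow> admissible X w"
  unfolding admissible_def by blast

lemma admissible_if_weight_fun:
  assumes "weight_fun G w"
  shows "admissible (verts G) w"
  unfolding admissible_def
proof (intro conjI ballI impI)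
  fix u assume "u \<in> verts G"
  then have "DV u \<in> Dset G" by (simp add: Dset_def)
  then show "0 \<le> w (DV u)" using assms by (simp add: weight_fun_def)
next
  fix u v assume uv: "u \<in> verts G" "v \<in> verts G" "u \<noteq> v"
  then have "DO u v \<in> Dset G" by (auto simp: Dset_def)
  then show "0 \<le> w (DO u v)" using assms by (simp add: weight_fun_def)
  show "w (DO u v) \<le> w (DU {u, v})" using assms uv by (simp add: weight_fun_def)
qed

lemma finite_offdiag: "finite X \<Longrightarrow> finite (offdiag X)"
  by (rule finite_subset[of _ "X \<times> X"]) (auto simp: offdiag_def)

lemma offdiag_mono: "X \<subseteq> Y \<Longrightarrow> offdiag X \<subseteq> offdiag Y"
  by (auto simp: offdiag_def)

lemma sum_offdiag_product:
  assumes "finite V" "X \<subseteq> V" "Y \<subseteq> V" "X \<inter> Y = {}"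
  shows "(\<Sum>p\<in>offdiag V. if fst p \<in> X \<and> snd p \<in> Y then f p else 0) = (\<Sum>u\<in>X. \<Sum>v\<in>Y. f (u, v))"
proof -
  have "(\<Sum>p\<in>offdiag V. if fst p \<in> X \<and> snd p \<in> Y then f p else 0)
      = (\<Sum>p\<in>{p\<in>offdiag V. fst p \<in> X \<and> snd p \<in> Y}. f p)"
    by (simp add: sum.inter_filter finite_offdiag assms)
  also have "{p\<in>offdiag V. fst p \<in> X \<and> snd p \<in> Y} = X \<times> Y"
    using assms by (auto simp: offdiag_def)
  finally show ?thesis by (simp add: sum.cartesian_product)
qed

lemma sum_offdiag_restrict:
  assumes "finite V" "X \<subseteq> V"
  shows "(\<Sum>p\<in>offdiag V. if p \<in> offdiag X then f p else 0) = (\<Sum>p\<in>offdiag X. f p)"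
proof -
  have "(\<Sum>p\<in>offdiag V. if p \<in> offdiag X then f p else 0) = (\<Sum>p\<in>{p\<in>offdiag V. p \<in> offdiag X}. f p)"
    by (simp add: sum.inter_filter finite_offdiag assms)
  also have "{p\<in>offdiag V. p \<in> offdiag X} = offdiag X"
    using assms offdiag_mono by blast
  finally show ?thesis .
qed

lemma sum_offdiag_doubleton:
  fixes f :: "'a set \<Rightarrow> int"
  assumes "finite X"
  shows "(\<Sum>p\<in>offdiag X. f {fst p, snd p}) = 2 * (\<Sum>e\<in>binom2 X. f e)"
proof -
  have image: "(\<lambda>p. {fst p, snd p}) ` offdiag X = binom2 X"
  proof
    show "(\<lambda>p. {fst p, snd p}) ` offdiag X \<subseteq> binom2 X"
      by (auto simp: offdiag_def binom2_def)
    show "binom2 X \<subseteq> (\<lambda>p. {fst p, snd p}) ` offdiag X"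
    proof
      fix e assume "e \<in> binom2 X"
      then obtain a b where "a \<noteq> b" "e = {a, b}" "e \<subseteq> X"
        by (auto simp: binom2_def card_2_iff)
      then show "e \<in> (\<lambda>p. {fst p, snd p}) ` offdiag X"
        by (intro image_eqI[of _ _ "(a, b)"]) (auto simp: offdiag_def)
    qed
  qed
  have fibre: "(\<Sum>p\<in>{p. p \<in> offdiag X \<and> {fst p, snd p} = e}. f {fst p, snd p}) = 2 * f e"
    if "e \<in> binom2 X" for e
  proof -
    obtain a b where ab: "a \<noteq> b" "e = {a, b}" "e \<subseteq> X"
      using \<open>e \<in> binom2 X\<close> by (auto simp: binom2_def card_2_iff)
    then have "{p. p \<in> offdiag X \<and> {fst p, snd p} = e} = {(a, b), (b, a)}"
      by (auto simp: offdiag_def doubleton_eq_iff)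
    then show ?thesis using ab by (simp add: insert_commute)
  qed
  have "(\<Sum>p\<in>offdiag X. f {fst p, snd p})
      = (\<Sum>e\<in>binom2 X. \<Sum>p\<in>{p. p \<in> offdiag X \<and> {fst p, snd p} = e}. f {fst p, snd p})"
    unfolding image[symmetric] by (rule sum.image_gen[OF finite_offdiag[OF assms]])
  also have "\<dots> = (\<Sum>e\<in>binom2 X. 2 * f e)"
    by (rule sum.cong[OF refl fibre])
  finally show ?thesis by (simp add: sum_distrib_left)
qed

text \<open>Doubling the weight turns the sum over unordered pairs outside \<open>S\<close> into a sum over ordered
  pairs, so that every pair of vertices contributes through the single term \<open>pair_weight\<close>.\<close>

lemma setweight_on_pair_sum:
  assumes "finite V" "S \<subseteq> V"
  shows "2 * setweight_on V w S = 2 * (\<Sum>u\<in>S. w (DV u)) + (\<Sum>p\<in>offdiag V. pair_weight w S p)"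
proof -
  have split: "(\<Sum>p\<in>offdiag V. pair_weight w S p) =
      (\<Sum>p\<in>offdiag V. if fst p \<in> S \<and> snd p \<in> V - S then w (DO (fst p) (snd p)) else 0)
    + (\<Sum>p\<in>offdiag V. if fst p \<in> V - S \<and> snd p \<in> S then w (DO (snd p) (fst p)) else 0)
    + (\<Sum>p\<in>offdiag V. if p \<in> offdiag (V - S) then w (DU {fst p, snd p}) else 0)"
    unfolding sum.distrib[symmetric]
    by (rule sum.cong[OF refl]) (auto simp: pair_weight_def offdiag_def)
  have out: "(\<Sum>p\<in>offdiag V. if fst p \<in> S \<and> snd p \<in> V - S then w (DO (fst p) (snd p)) else 0)
      = (\<Sum>u\<in>S. \<Sum>v\<in>V - S. w (DO u v))"
    using sum_offdiag_product[OF assms(1,2), of "V - S" "\<lambda>p. w (DO (fst p) (snd p))"] by auto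
  have into: "(\<Sum>p\<in>offdiag V. if fst p \<in> V - S \<and> snd p \<in> S then w (DO (snd p) (fst p)) else 0)
      = (\<Sum>u\<in>S. \<Sum>v\<in>V - S. w (DO u v))"
    using sum_offdiag_product[OF assms(1) _ assms(2), of "V - S" "\<lambda>p. w (DO (snd p) (fst p))"]
    by (auto simp: sum.swap[of _ "V - S"])
  have outside: "(\<Sum>p\<in>offdiag V. if p \<in> offdiag (V - S) then w (DU {fst p, snd p}) else 0)
      = 2 * (\<Sum>e\<in>binom2 (V - S). w (DU e))"
    using sum_offdiag_restrict[OF assms(1), of "V - S" "\<lambda>p. w (DU {fst p, snd p})"]
      sum_offdiag_doubleton[of "V - S" "\<lambda>e. w (DU e)"] assms by auto
  show ?thesis
    unfolding split out into outside by (simp add: setweight_on_def)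
qed

lemma admissible_pair:
  assumes "admissible V w" "p \<in> offdiag V"
  shows "0 \<le> w (DO (fst p) (snd p)) \<and> w (DO (fst p) (snd p)) \<le> w (DU {fst p, snd p})
       \<and> 0 \<le> w (DO (snd p) (fst p)) \<and> w (DO (snd p) (fst p)) \<le> w (DU {fst p, snd p})"
  using assms unfolding admissible_def offdiag_def by (auto simp: insert_commute)

lemma pair_weight_antimono:
  assumes "admissible V w" "p \<in> offdiag V" "S2 \<subseteq> S1"
  shows "pair_weight w S1 p \<le> pair_weight w S2 p"
  using admissible_pair[OF assms(1,2)] assms(3) unfolding pair_weight_def by auto

lemma pair_weight_exchange:
  assumes "admissible V w" "p \<in> offdiag V" "P \<subseteq> S" "c \<notin> S"
  shows "pair_weight w S p \<le> pair_weight w (S - P \<union> {c}) p + pair_weight w P p"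
  using admissible_pair[OF assms(1,2)] assms(3,4) unfolding pair_weight_def by auto

lemma vertex_sum_le_setweight_on:
  assumes "finite V" "admissible V w" "S \<subseteq> V"
  shows "(\<Sum>u\<in>S. w (DV u)) \<le> setweight_on V w S"
proof -
  have "0 \<le> pair_weight w S p" if "p \<in> offdiag V" for p
    using pair_weight_antimono[OF assms(2) that, of "{}" S] admissible_pair[OF assms(2) that]
    by (simp add: pair_weight_def)
  then have "0 \<le> (\<Sum>p\<in>offdiag V. pair_weight w S p)" by (rule sum_nonneg)
  then show ?thesis using setweight_on_pair_sum[OF assms(1,3), of w] by linarith
qed

lemma setweight_on_nonneg:
  assumes "finite V" "admissible V w" "S \<subseteq> V"
  shows "0 \<le> setweight_on V w S"
proof -
  have "0 \<le> (\<Sum>u\<in>S. w (DV u))"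
    by (rule sum_nonneg) (use assms in \<open>auto simp: admissible_def\<close>)
  then show ?thesis using vertex_sum_le_setweight_on[OF assms] by linarith
qed

lemma setweight_on_remove:
  assumes "finite V" "admissible V w" "S \<subseteq> V" "x \<in> S"
  shows "setweight_on V w S \<le> setweight_on V w (S - {x}) + w (DV x)"
proof -
  have "finite S" using assms finite_subset by blast
  then have "(\<Sum>u\<in>S. w (DV u)) = w (DV x) + (\<Sum>u\<in>S - {x}. w (DV u))"
    using assms(4) by (simp add: sum.remove)
  moreover have "(\<Sum>p\<in>offdiag V. pair_weight w S p) \<le> (\<Sum>p\<in>offdiag V. pair_weight w (S - {x}) p)"
    by (rule sum_mono) (rule pair_weight_antimono[OF assms(2)], auto)
  ultimately show ?thesis
    using setweight_on_pair_sum[OF assms(1,3), of w] setweight_on_pair_sum[OF assms(1), of "S - {x}" w] assms(3)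
    by fastforce
qed

lemma setweight_on_exchange:
  assumes "finite V" "admissible V w" "S \<subseteq> V" "c \<in> V - S" "P \<subseteq> S"
  shows "setweight_on V w S + w (DV c) \<le> setweight_on V w (S - P \<union> {c}) + setweight_on V w P"
proof -
  have fS: "finite S" using assms finite_subset by blast
  have "(\<Sum>p\<in>offdiag V. pair_weight w S p)
      \<le> (\<Sum>p\<in>offdiag V. pair_weight w (S - P \<union> {c}) p + pair_weight w P p)"
    by (rule sum_mono) (use pair_weight_exchange[OF assms(2) _ assms(5)] assms(4) in blast)
  moreover have "(\<Sum>u\<in>S - P \<union> {c}. w (DV u)) = w (DV c) + (\<Sum>u\<in>S - P. w (DV u))"
    using fS assms(4) by simp
  moreover have "(\<Sum>u\<in>S. w (DV u)) = (\<Sum>u\<in>S - P. w (DV u)) + (\<Sum>u\<in>P. w (DV u))"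
    using sum.subset_diff[OF assms(5) fS] by simp
  moreover have "S - P \<union> {c} \<subseteq> V" "P \<subseteq> V" using assms by auto
  ultimately show ?thesis
    using setweight_on_pair_sum[OF assms(1,3), of w] setweight_on_pair_sum[OF assms(1), of "S - P \<union> {c}" w]
      setweight_on_pair_sum[OF assms(1), of P w]
    by (simp add: sum.distrib)
qed

lemma setweight_on_diff_pair_sum:
  assumes "finite V" "C \<subseteq> V" "S \<subseteq> V"
  shows "2 * setweight_on V w S - 2 * setweight_on C w (S \<inter> C) =
     2 * (\<Sum>u\<in>S - C. w (DV u)) + (\<Sum>p\<in>offdiag V - offdiag C. pair_weight w S p)"
proof -
  have fS: "finite S" and fC: "finite C" using assms finite_subset by blast+
  have "(\<Sum>u\<in>S. w (DV u)) = (\<Sum>u\<in>S - C. w (DV u)) + (\<Sum>u\<in>S \<inter> C. w (DV u))"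
    using sum.subset_diff[of "S \<inter> C" S "\<lambda>u. w (DV u)"] fS by (simp add: Diff_Int)
  moreover have "(\<Sum>p\<in>offdiag V. pair_weight w S p)
      = (\<Sum>p\<in>offdiag V - offdiag C. pair_weight w S p) + (\<Sum>p\<in>offdiag C. pair_weight w S p)"
    using sum.subset_diff[OF offdiag_mono[OF assms(2)] finite_offdiag[OF assms(1)]] by simp
  moreover have "(\<Sum>p\<in>offdiag C. pair_weight w (S \<inter> C) p) = (\<Sum>p\<in>offdiag C. pair_weight w S p)"
    by (rule sum.cong[OF refl]) (auto simp: pair_weight_def offdiag_def)
  ultimately show ?thesis
    using setweight_on_pair_sum[OF assms(1,3), of w] setweight_on_pair_sum[OF fC, of "S \<inter> C" w] by simp
qed

lemma setweight_on_diff_cong: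
  assumes "finite V" "C \<subseteq> V" "S \<subseteq> V"
    and "\<And>u. u \<in> V - C \<Longrightarrow> w' (DV u) = w (DV u)"
    and "\<And>u v. u \<in> V \<Longrightarrow> v \<in> V \<Longrightarrow> \<not> (u \<in> C \<and> v \<in> C) \<Longrightarrow> w' (DO u v) = w (DO u v)"
    and "\<And>u v. u \<in> V \<Longrightarrow> v \<in> V \<Longrightarrow> \<not> (u \<in> C \<and> v \<in> C) \<Longrightarrow> w' (DU {u, v}) = w (DU {u, v})"
  shows "setweight_on V w' S - setweight_on C w' (S \<inter> C) = setweight_on V w S - setweight_on C w (S \<inter> C)"
proof -
  have "(\<Sum>u\<in>S - C. w' (DV u)) = (\<Sum>u\<in>S - C. w (DV u))"
    by (rule sum.cong[OF refl]) (use assms in auto)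
  moreover have "(\<Sum>p\<in>offdiag V - offdiag C. pair_weight w' S p) = (\<Sum>p\<in>offdiag V - offdiag C. pair_weight w S p)"
  proof (rule sum.cong[OF refl])
    fix p assume "p \<in> offdiag V - offdiag C"
    then have "fst p \<in> V" "snd p \<in> V" "\<not> (fst p \<in> C \<and> snd p \<in> C)"
      by (auto simp: offdiag_def)
    then show "pair_weight w' S p = pair_weight w S p"
      unfolding pair_weight_def using assms(5,6) by metis
  qed
  ultimately show ?thesis
    using setweight_on_diff_pair_sum[OF assms(1-3), of w] setweight_on_diff_pair_sum[OF assms(1-3), of w']
    by linarith
qed

lemma setweight_on_diff_antimono:
  assumes "finite V" "admissible V w" "C \<subseteq> V" "S1 \<subseteq> V" "S2 \<subseteq> S1" "S1 - S2 \<subseteq> C"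
  shows "setweight_on V w S1 - setweight_on C w (S1 \<inter> C) \<le> setweight_on V w S2 - setweight_on C w (S2 \<inter> C)"
proof -
  have "S1 - C = S2 - C" using assms by blast
  moreover have "(\<Sum>p\<in>offdiag V - offdiag C. pair_weight w S1 p) \<le> (\<Sum>p\<in>offdiag V - offdiag C. pair_weight w S2 p)"
    by (rule sum_mono) (use pair_weight_antimono[OF assms(2) _ assms(5)] in blast)
  ultimately show ?thesis
    using setweight_on_diff_pair_sum[OF assms(1,3,4), of w] setweight_on_diff_pair_sum[OF assms(1,3), of S2 w] assms(4,5)
    by fastforce
qed

lemma setweight_on_split:
  assumes "finite V" "V = X \<union> Y" "S \<subseteq> V"
    and cross: "\<And>p. p \<in> offdiag V \<Longrightarrow> \<not> (fst p \<in> X \<and> snd p \<in> X) \<Longrightarrow> \<not> (fst p \<in> Y \<and> snd p \<in> Y)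
                  \<Longrightarrow> pair_weight w S p = 0"
  shows "setweight_on V w S + setweight_on (X \<inter> Y) w (S \<inter> (X \<inter> Y))
       = setweight_on X w (S \<inter> X) + setweight_on Y w (S \<inter> Y)"
proof -
  have sub: "X \<subseteq> V" "Y \<subseteq> V" "X \<inter> Y \<subseteq> V" using assms(2) by blast+
  have fin: "finite X" "finite Y" "finite (X \<inter> Y)" using finite_subset[OF _ assms(1)] sub by blast+
  have restrict: "(\<Sum>p\<in>offdiag Z. pair_weight w S p) = (\<Sum>p\<in>offdiag Z. pair_weight w (S \<inter> Z) p)" for Z
    by (rule sum.cong[OF refl]) (auto simp: pair_weight_def offdiag_def)
  have "(\<Sum>p\<in>offdiag V. pair_weight w S p) = (\<Sum>p\<in>offdiag V. if p \<in> offdiag X then pair_weight w S p else 0)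
      + (\<Sum>p\<in>offdiag V. if p \<in> offdiag Y then pair_weight w S p else 0)
      - (\<Sum>p\<in>offdiag V. if p \<in> offdiag (X \<inter> Y) then pair_weight w S p else 0)"
    unfolding sum.distrib[symmetric] sum_subtractf[symmetric]
    by (rule sum.cong[OF refl]) (use cross in \<open>auto simp: offdiag_def\<close>)
  then have pairs: "(\<Sum>p\<in>offdiag V. pair_weight w S p) = (\<Sum>p\<in>offdiag X. pair_weight w (S \<inter> X) p)
      + (\<Sum>p\<in>offdiag Y. pair_weight w (S \<inter> Y) p) - (\<Sum>p\<in>offdiag (X \<inter> Y). pair_weight w (S \<inter> (X \<inter> Y)) p)"
    by (simp only: sum_offdiag_restrict[OF assms(1)] sub restrict)
  have "S \<inter> X \<union> S \<inter> Y = S" "S \<inter> X \<inter> (S \<inter> Y) = S \<inter> (X \<inter> Y)" using assms by auto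
  then have vertices: "(\<Sum>u\<in>S. w (DV u)) + (\<Sum>u\<in>S \<inter> (X \<inter> Y). w (DV u))
      = (\<Sum>u\<in>S \<inter> X. w (DV u)) + (\<Sum>u\<in>S \<inter> Y. w (DV u))"
    using sum.union_inter[of "S \<inter> X" "S \<inter> Y" "\<lambda>u. w (DV u)"] fin by simp
  show ?thesis
    using pairs vertices setweight_on_pair_sum[OF assms(1,3), of w]
      setweight_on_pair_sum[OF fin(1) Int_lower2[of S], of w]
      setweight_on_pair_sum[OF fin(2) Int_lower2[of S], of w]
      setweight_on_pair_sum[OF fin(3) Int_lower2[of S], of w]
    by linarith
qed

lemma binom2_doubleton: "a \<noteq> b \<Longrightarrow> binom2 {a, b} = {{a, b}}"
  by (auto simp: binom2_def card_2_iff doubleton_eq_iff)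

lemma binom2_singleton: "binom2 {a} = {}"
  by (auto simp: binom2_def card_2_iff)

lemma setweight_on_doubleton:
  assumes "a \<noteq> b"
  shows "setweight_on {a, b} w {} = w (DU {a, b})"
    "setweight_on {a, b} w {a} = w (DV a) + w (DO a b)"
    "setweight_on {a, b} w {b} = w (DV b) + w (DO b a)"
    "setweight_on {a, b} w {a, b} = w (DV a) + w (DV b)"
proof -
  have "{a, b} - {a} = {b}" "{a, b} - {b} = {a}" "binom2 ({} :: 'a set) = {}"
    using assms by (auto simp: binom2_def)
  then show "setweight_on {a, b} w {} = w (DU {a, b})"
    "setweight_on {a, b} w {a} = w (DV a) + w (DO a b)"
    "setweight_on {a, b} w {b} = w (DV b) + w (DO b a)"
    "setweight_on {a, b} w {a, b} = w (DV a) + w (DV b)"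
    using assms by (simp_all add: setweight_on_def binom2_doubleton binom2_singleton)
qed

section \<open>Reductions\<close>

lemma finite_stable_sets: "finite (verts G) \<Longrightarrow> finite {S. stable G S}"
  by (rule finite_subset[of _ "Pow (verts G)"]) (auto simp: stable_def)

lemma setweight_le_alpha:
  assumes "finite (verts G)" "stable G S"
  shows "setweight G w S \<le> alpha G w"
  unfolding alpha_def using assms finite_stable_sets[OF assms(1)] by (intro Max_ge) auto

lemma alpha_attained:
  assumes "finite (verts G)"
  obtains S where "stable G S" "alpha G w = setweight G w S"
proof -
  have "stable G {}" by (simp add: stable_def)
  then have "alpha G w \<in> setweight G w ` {S. stable G S}"
    unfolding alpha_def using finite_stable_sets[OF assms] by (intro Max_in) auto
  then show ?thesis using that by auto
qed

lemma stable_subset: "stable H S \<Longrightarrow> T \<subseteq> S \<Longrightarrow> stable H T"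
  unfolding stable_def by blast

lemma verts_induced: "verts (induced H R) = R"
  by (simp add: induced_def verts_def)

lemma stable_induced_iff:
  "R \<subseteq> verts H \<Longrightarrow> stable (induced H R) S \<longleftrightarrow> stable H S \<and> S \<subseteq> R"
  by (auto simp: stable_def induced_def verts_def theta_def)

definition red_penalty :: "'a trigraph \<Rightarrow> ('a delem \<Rightarrow> int) \<Rightarrow> 'a set \<Rightarrow> 'a \<Rightarrow> int" where
  "red_penalty H w R u = (\<Sum>v\<in>verts H - R. w (DU {u, v}) - w (DO u v))"

lemma red_w_DV: "red_w H w R (DV u) = max (w (DV u) - red_penalty H w R u) 0"
  by (simp add: red_w_def red_penalty_def)

lemma pair_weight_red_w: "pair_weight (red_w H w R) S p = pair_weight w S p"
  by (simp add: pair_weight_def red_w_def)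

text \<open>Pairs meeting \<open>V - R\<close> contribute the exterior weight, except that each \<open>u \<in> S\<close> collects
  \<open>w(u,v)\<close> instead of \<open>w(uv)\<close> from every \<open>v \<notin> R\<close>: this loss is the penalty subtracted by the reduction.\<close>

lemma pair_sum_exterior:
  assumes "finite (verts H)" "R \<subseteq> verts H" "S \<subseteq> R"
  shows "(\<Sum>p\<in>offdiag (verts H). pair_weight w S p) =
    (\<Sum>p\<in>offdiag R. pair_weight w S p) + 2 * Ext H w R - 2 * (\<Sum>u\<in>S. red_penalty H w R u)"
proof -
  let ?V = "verts H" and ?U = "\<lambda>p. w (DU {fst p, snd p})"
  have SV: "S \<subseteq> ?V" using assms by blast
  have "(\<Sum>p\<in>offdiag ?V. pair_weight w S p) =
     (\<Sum>p\<in>offdiag ?V. if p \<in> offdiag R then pair_weight w S p else 0)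
   + (\<Sum>p\<in>offdiag ?V. if p \<in> offdiag (?V - R) then ?U p else 0)
   + (\<Sum>p\<in>offdiag ?V. if fst p \<in> R \<and> snd p \<in> ?V - R then ?U p else 0)
   + (\<Sum>p\<in>offdiag ?V. if fst p \<in> ?V - R \<and> snd p \<in> R then ?U p else 0)
   - (\<Sum>p\<in>offdiag ?V. if fst p \<in> S \<and> snd p \<in> ?V - R then ?U p - w (DO (fst p) (snd p)) else 0)
   - (\<Sum>p\<in>offdiag ?V. if fst p \<in> ?V - R \<and> snd p \<in> S then ?U p - w (DO (snd p) (fst p)) else 0)"
    unfolding sum.distrib[symmetric] sum_subtractf[symmetric]
    by (rule sum.cong[OF refl]) (use assms in \<open>auto simp: pair_weight_def offdiag_def\<close>)
  moreover have "(\<Sum>p\<in>offdiag ?V. if p \<in> offdiag (?V - R) then ?U p else 0)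
      = 2 * (\<Sum>e\<in>binom2 (?V - R). w (DU e))"
    using sum_offdiag_restrict[OF assms(1), of "?V - R" ?U] sum_offdiag_doubleton[of "?V - R" "\<lambda>e. w (DU e)"]
      assms(1) by auto
  moreover have "(\<Sum>p\<in>offdiag ?V. if fst p \<in> R \<and> snd p \<in> ?V - R then ?U p else 0)
      = (\<Sum>u\<in>R. \<Sum>v\<in>?V - R. w (DU {u, v}))"
    using sum_offdiag_product[OF assms(1,2), of "?V - R" ?U] by auto
  moreover have "(\<Sum>p\<in>offdiag ?V. if fst p \<in> ?V - R \<and> snd p \<in> R then ?U p else 0)
      = (\<Sum>u\<in>R. \<Sum>v\<in>?V - R. w (DU {u, v}))"
    using sum_offdiag_product[OF assms(1) _ assms(2), of "?V - R" ?U]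
    by (auto simp: sum.swap[of _ "?V - R"] insert_commute)
  moreover have "(\<Sum>p\<in>offdiag ?V. if fst p \<in> S \<and> snd p \<in> ?V - R then ?U p - w (DO (fst p) (snd p)) else 0)
      = (\<Sum>u\<in>S. red_penalty H w R u)"
    using sum_offdiag_product[OF assms(1) SV, of "?V - R" "\<lambda>p. ?U p - w (DO (fst p) (snd p))"] assms
    by (auto simp: red_penalty_def)
  moreover have "(\<Sum>p\<in>offdiag ?V. if fst p \<in> ?V - R \<and> snd p \<in> S then ?U p - w (DO (snd p) (fst p)) else 0)
      = (\<Sum>u\<in>S. red_penalty H w R u)"
    using sum_offdiag_product[OF assms(1) _ SV, of "?V - R" "\<lambda>p. ?U p - w (DO (snd p) (fst p))"] assms
    by (auto simp: red_penalty_def sum.swap[of _ "?V - R"] insert_commute)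
  ultimately show ?thesis
    by (simp add: Ext_def sum_offdiag_restrict[OF assms(1,2)])
qed

lemma setweight_red:
  assumes "finite (verts H)" "R \<subseteq> verts H" "S \<subseteq> R"
  shows "setweight_on R (red_w H w R) S + Ext H w R =
    setweight_on (verts H) w S + (\<Sum>u\<in>S. max 0 (red_penalty H w R u - w (DV u)))"
proof -
  have fR: "finite R" using assms finite_subset by blast
  have "max 0 (red_penalty H w R u - w (DV u)) = red_w H w R (DV u) - w (DV u) + red_penalty H w R u" for u
    by (simp add: red_w_DV)
  then have "(\<Sum>u\<in>S. max 0 (red_penalty H w R u - w (DV u)))
      = (\<Sum>u\<in>S. red_w H w R (DV u)) - (\<Sum>u\<in>S. w (DV u)) + (\<Sum>u\<in>S. red_penalty H w R u)"
    by (simp add: sum.distrib sum_subtractf)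
  then show ?thesis
    using setweight_on_pair_sum[OF fR assms(3), of "red_w H w R"]
      setweight_on_pair_sum[OF assms(1) order_trans[OF assms(3,2)], of w]
      pair_sum_exterior[OF assms, of w]
    by (simp add: pair_weight_red_w)
qed

lemma pair_weight_drop:
  assumes "admissible V w" "p \<in> offdiag V" "S1 \<subseteq> S0" "S0 \<subseteq> R"
  shows "pair_weight w S0 p
      + (if fst p \<in> S0 - S1 \<and> snd p \<in> V - R then w (DU {fst p, snd p}) - w (DO (fst p) (snd p)) else 0)
      + (if fst p \<in> V - R \<and> snd p \<in> S0 - S1 then w (DU {fst p, snd p}) - w (DO (snd p) (fst p)) else 0)
    \<le> pair_weight w S1 p"
  using admissible_pair[OF assms(1,2)] assms(3,4) unfolding pair_weight_def by (auto simp: insert_commute)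

lemma setweight_on_drop:
  assumes "finite (verts H)" "admissible (verts H) w" "R \<subseteq> verts H" "S0 \<subseteq> R" "S1 \<subseteq> S0"
  shows "setweight_on (verts H) w S0 + (\<Sum>u\<in>S0 - S1. red_penalty H w R u - w (DV u))
       \<le> setweight_on (verts H) w S1"
proof -
  let ?V = "verts H" and ?E = "S0 - S1" and ?U = "\<lambda>p. w (DU {fst p, snd p})"
  have sub: "S0 \<subseteq> ?V" "S1 \<subseteq> ?V" "?E \<subseteq> ?V" using assms(3,4,5) by blast+
  have "(\<Sum>p\<in>offdiag ?V. pair_weight w S0 p
        + (if fst p \<in> ?E \<and> snd p \<in> ?V - R then ?U p - w (DO (fst p) (snd p)) else 0)
        + (if fst p \<in> ?V - R \<and> snd p \<in> ?E then ?U p - w (DO (snd p) (fst p)) else 0))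
     \<le> (\<Sum>p\<in>offdiag ?V. pair_weight w S1 p)"
    by (rule sum_mono) (rule pair_weight_drop[OF assms(2) _ assms(5,4)])
  moreover have "(\<Sum>p\<in>offdiag ?V. if fst p \<in> ?E \<and> snd p \<in> ?V - R then ?U p - w (DO (fst p) (snd p)) else 0)
     = (\<Sum>u\<in>?E. red_penalty H w R u)"
    using sum_offdiag_product[OF assms(1) sub(3), of "?V - R" "\<lambda>p. ?U p - w (DO (fst p) (snd p))"] assms
    by (auto simp: red_penalty_def)
  moreover have "(\<Sum>p\<in>offdiag ?V. if fst p \<in> ?V - R \<and> snd p \<in> ?E then ?U p - w (DO (snd p) (fst p)) else 0)
     = (\<Sum>u\<in>?E. red_penalty H w R u)"
    using sum_offdiag_product[OF assms(1) _ sub(3), of "?V - R" "\<lambda>p. ?U p - w (DO (snd p) (fst p))"] assms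
    by (auto simp: red_penalty_def sum.swap[of _ "?V - R"] insert_commute)
  moreover have "(\<Sum>u\<in>S0. w (DV u)) = (\<Sum>u\<in>?E. w (DV u)) + (\<Sum>u\<in>S1. w (DV u))"
    using sum.subset_diff[OF assms(5)] finite_subset[OF sub(1) assms(1)] by simp
  ultimately show ?thesis
    using setweight_on_pair_sum[OF assms(1) sub(1), of w] setweight_on_pair_sum[OF assms(1) sub(2), of w]
    by (simp add: sum.distrib sum_subtractf algebra_simps)
qed

text \<open>The reduction \<open>Red[H,w;R]\<close> together with the exterior weight computes the largest weight
  in \<open>(H,w)\<close> of a stable set contained in \<open>R\<close>.\<close>

lemma setweight_le_alphaR:
  assumes "finite (verts H)" "R \<subseteq> verts H" "stable H S" "S \<subseteq> R"
  shows "setweight H w S \<le> alphaR H w R"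
proof -
  have "stable (induced H R) S" using assms(2-4) by (simp add: stable_induced_iff)
  then have "setweight_on R (red_w H w R) S \<le> alpha (induced H R) (red_w H w R)"
    using setweight_le_alpha[of "induced H R" S] finite_subset[OF assms(2,1)]
    by (simp add: verts_induced setweight_eq_setweight_on)
  moreover have "0 \<le> (\<Sum>u\<in>S. max 0 (red_penalty H w R u - w (DV u)))"
    by (rule sum_nonneg) simp
  ultimately show ?thesis
    using setweight_red[OF assms(1,2,4), of w] by (simp add: alphaR_def Red_def setweight_eq_setweight_on)
qed

lemma alphaR_attained:
  assumes "finite (verts H)" "admissible (verts H) w" "R \<subseteq> verts H"
  obtains S where "stable H S" "S \<subseteq> R" "alphaR H w R = setweight H w S"
proof -
  obtain S0 where S0: "stable (induced H R) S0"
      "alpha (induced H R) (red_w H w R) = setweight_on R (red_w H w R) S0"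
    using alpha_attained[of "induced H R" "red_w H w R"] finite_subset[OF assms(3,1)]
    by (auto simp: verts_induced setweight_eq_setweight_on)
  then have st0: "stable H S0" "S0 \<subseteq> R" using assms(3) by (simp_all add: stable_induced_iff)
  define S1 where "S1 = {u\<in>S0. red_penalty H w R u \<le> w (DV u)}"
  have S10: "S1 \<subseteq> S0" by (auto simp: S1_def)
  have "(\<Sum>u\<in>S0. max 0 (red_penalty H w R u - w (DV u)))
      = (\<Sum>u\<in>S0 - S1. max 0 (red_penalty H w R u - w (DV u)))"
    by (rule sum.mono_neutral_right) (use finite_subset[OF order_trans[OF st0(2) assms(3)] assms(1)] in
        \<open>auto simp: S1_def\<close>)
  also have "\<dots> = (\<Sum>u\<in>S0 - S1. red_penalty H w R u - w (DV u))"
    by (rule sum.cong) (auto simp: S1_def)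
  finally have "alphaR H w R \<le> setweight H w S1"
    using setweight_red[OF assms(1,3) st0(2), of w] setweight_on_drop[OF assms st0(2) S10] S0(2)
    by (simp add: alphaR_def Red_def setweight_eq_setweight_on)
  moreover have "stable H S1" "S1 \<subseteq> R" using stable_subset[OF st0(1) S10] S10 st0(2) by auto
  moreover have "setweight H w S1 \<le> alphaR H w R"
    using setweight_le_alphaR[OF assms(1,3)] calculation(2,3) by blast
  ultimately show ?thesis using that by simp
qed

lemma theta_commute: "theta H u v = theta H v u"
  by (simp add: theta_def insert_commute)

lemma alphaR_nonneg:
  assumes "finite (verts H)" "admissible (verts H) w" "R \<subseteq> verts H"
  shows "0 \<le> alphaR H w R"
proof -
  have "setweight H w {} \<le> alphaR H w R"
    by (rule setweight_le_alphaR[OF assms(1,3)]) (auto simp: stable_def)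
  then show ?thesis
    using setweight_on_nonneg[OF assms(1,2), of "{}"] by (simp add: setweight_eq_setweight_on)
qed

lemma vertex_le_alphaR:
  assumes "finite (verts H)" "admissible (verts H) w" "R \<subseteq> verts H" "c \<in> R"
  shows "w (DV c) \<le> alphaR H w R"
proof -
  have "setweight H w {c} \<le> alphaR H w R"
    by (rule setweight_le_alphaR[OF assms(1,3)]) (use assms in \<open>auto simp: stable_def\<close>)
  then show ?thesis
    using vertex_sum_le_setweight_on[OF assms(1,2), of "{c}"] assms(3,4)
    by (auto simp: setweight_eq_setweight_on)
qed

lemma alphaR_remove:
  assumes "finite (verts H)" "admissible (verts H) w" "R \<subseteq> verts H" "c \<in> R"
  shows "alphaR H w R \<le> alphaR H w (R - {c}) + w (DV c)"
proof -
  obtain S where S: "stable H S" "S \<subseteq> R" "alphaR H w R = setweight H w S"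
    using alphaR_attained[OF assms(1-3)] .
  have "setweight H w (S - {c}) \<le> alphaR H w (R - {c})"
    using setweight_le_alphaR[OF assms(1), of "R - {c}" "S - {c}"] stable_subset[OF S(1)] S(2) assms(3)
    by blast
  moreover have "setweight H w S \<le> setweight H w (S - {c}) + w (DV c)"
  proof (cases "c \<in> S")
    case True
    then show ?thesis using setweight_on_remove[OF assms(1,2)] S(2) assms(3)
      by (simp add: setweight_eq_setweight_on)
  next
    case False
    then show ?thesis using assms(2-4) by (simp add: admissible_def subset_iff)
  qed
  ultimately show ?thesis using S(3) by linarith
qed

text \<open>Swapping \<open>c\<close> into an optimal stable set \<open>S \<subseteq> R\<close>: the vertices of \<open>S\<close> that are not
  anti-adjacent to \<open>c\<close> leave, and they form a stable subset of \<open>R\<close> avoiding \<open>c'\<close>.\<close>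

lemma alphaR_exchange:
  assumes "finite (verts H)" "admissible (verts H) w" "R \<subseteq> verts H" "c \<in> verts H - R"
    and "theta H c' c \<le> 0"
  shows "alphaR H w R + w (DV c) \<le> alphaR H w (insert c R) + alphaR H w (R - {c'})"
proof -
  obtain S where S: "stable H S" "S \<subseteq> R" "alphaR H w R = setweight H w S"
    using alphaR_attained[OF assms(1-3)] .
  define P where "P = {u \<in> S. 0 < theta H u c}"
  have P: "P \<subseteq> S" "P \<subseteq> R - {c'}" using S(2) assms(5) unfolding P_def by force+
  have stable: "stable H (S - P \<union> {c})" unfolding stable_def
  proof (intro conjI ballI impI)
    show "S - P \<union> {c} \<subseteq> verts H" using S(2) assms(3,4) by blast
    have anti: "theta H u c \<le> 0" "theta H c u \<le> 0" if "u \<in> S - P" for u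
      using that theta_commute[of H c u] by (auto simp: P_def)
    fix x y assume "x \<in> S - P \<union> {c}" "y \<in> S - P \<union> {c}" "x \<noteq> y"
    then consider "x \<in> S" "y \<in> S" | "x \<in> S - P" "y = c" | "x = c" "y \<in> S - P" by blast
    then show "theta H x y \<le> 0"
      by cases (use S(1) anti \<open>x \<noteq> y\<close> in \<open>auto simp: stable_def\<close>)
  qed
  have "setweight H w (S - P \<union> {c}) \<le> alphaR H w (insert c R)"
    by (rule setweight_le_alphaR[OF assms(1) _ stable]) (use S(2) assms(3,4) in auto)
  moreover have "setweight H w P \<le> alphaR H w (R - {c'})"
    using setweight_le_alphaR[OF assms(1) _ stable_subset[OF S(1) P(1)] P(2)] assms(3) by blast
  moreover have "setweight H w S + w (DV c) \<le> setweight H w (S - P \<union> {c}) + setweight H w P"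
    using setweight_on_exchange[OF assms(1,2) _ _ P(1), of c] S(2) assms(3,4)
    by (auto simp: setweight_eq_setweight_on)
  ultimately show ?thesis using S(3) by linarith
qed

lemma verts_GX: "verts (GX G X c1 c2) = X \<union> {c1, c2}"
  by (simp add: GX_def verts_def)

lemma theta_GX: "theta (GX G X c1 c2) u v = (if {u, v} = {c1, c2} then 0 else theta G u v)"
  by (simp add: GX_def theta_def)

lemma stable_GX_iff:
  assumes "theta G c1 c2 \<le> 0" "X \<union> {c1, c2} \<subseteq> verts G"
  shows "stable (GX G X c1 c2) S \<longleftrightarrow> stable G S \<and> S \<subseteq> X \<union> {c1, c2}"
proof -
  have "theta (GX G X c1 c2) u v \<le> 0 \<longleftrightarrow> theta G u v \<le> 0" for u v
    unfolding theta_GX using assms(1) by (auto simp: theta_def)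
  then show ?thesis using assms(2) unfolding stable_def verts_GX by blast
qed

section \<open>Gluing along a two-vertex cut\<close>

locale stable_pair_cut =
  fixes G :: "'a trigraph" and w :: "'a delem \<Rightarrow> int" and A B :: "'a set" and c1 c2 :: 'a
  assumes trigraph: "is_trigraph G" and weight: "weight_fun G w"
    and cut: "cut_partition G A B {c1, c2}"
    and distinct: "c1 \<noteq> c2" and stable_C: "stable G {c1, c2}"
begin

abbreviation "C \<equiv> {c1, c2}"
abbreviation "GA \<equiv> GX G A c1 c2"
abbreviation "GB \<equiv> GX G B c1 c2"
abbreviation "w_B \<equiv> wB G w A c1 c2"

lemma verts_G: "verts G = A \<union> B \<union> C"
  using cut by (simp add: cut_partition_def)

lemma disjoint: "A \<inter> B = {}" "c1 \<notin> A" "c2 \<notin> A" "c1 \<notin> B" "c2 \<notin> B"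
  using cut by (auto simp: cut_partition_def)

lemma finite_G: "finite (verts G)"
  using trigraph by (simp add: is_trigraph_def)

lemma admissible_G: "admissible (verts G) w"
  by (rule admissible_if_weight_fun[OF weight])

lemma theta_C: "theta G c1 c2 \<le> 0"
  using stable_C distinct by (auto simp: stable_def)

lemma cross_weights_zero:
  assumes "a \<in> A" "b \<in> B"
  shows "w (DO a b) = 0" "w (DO b a) = 0" "w (DU {a, b}) = 0"
proof -
  have "a \<in> verts G" "b \<in> verts G" "a \<noteq> b" using assms disjoint verts_G by auto
  moreover have "theta G a b \<noteq> 0" using cut assms by (simp add: cut_partition_def)
  ultimately show "w (DO a b) = 0" "w (DO b a) = 0" "w (DU {a, b}) = 0"
    using weight unfolding weight_fun_def by blast+
qed

lemma verts_GA: "verts GA = A \<union> C" and verts_GB: "verts GB = B \<union> C"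
  by (simp_all add: verts_GX)

lemma verts_GA_subset: "verts GA \<subseteq> verts G"
  using verts_G by (auto simp: verts_GA)

lemma verts_GB_subset: "verts GB \<subseteq> verts G"
  using verts_G by (auto simp: verts_GB)

lemma finite_GA: "finite (verts GA)" and finite_GB: "finite (verts GB)"
  using finite_subset[OF _ finite_G] verts_GA_subset verts_GB_subset by blast+

lemma admissible_GA: "admissible (verts GA) w" and admissible_GB: "admissible (verts GB) w"
  using admissible_subset[OF admissible_G] verts_GA_subset verts_GB_subset by blast+

lemma stable_GA_iff: "stable GA S \<longleftrightarrow> stable G S \<and> S \<subseteq> A \<union> C"
  and stable_GB_iff: "stable GB S \<longleftrightarrow> stable G S \<and> S \<subseteq> B \<union> C"
  using stable_GX_iff[OF theta_C] verts_G by auto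

lemma alphaR_GA_bounds:
  "0 \<le> alphaR GA w A"
  "w (DV c2) \<le> alphaR GA w (A \<union> C)"
  "w (DV c2) \<le> alphaR GA w (A \<union> {c2})"
  "alphaR GA w (A \<union> C) \<le> alphaR GA w (A \<union> {c1}) + w (DV c2)"
  "alphaR GA w (A \<union> {c2}) \<le> alphaR GA w A + w (DV c2)"
  "alphaR GA w (A \<union> {c1}) + w (DV c2) \<le> alphaR GA w (A \<union> C) + alphaR GA w A"
proof -
  note facts = finite_GA admissible_GA
  have sets: "A \<union> C - {c2} = A \<union> {c1}" "A \<union> {c2} - {c2} = A" "A \<union> {c1} - {c1} = A"
    "insert c2 (A \<union> {c1}) = A \<union> C"
    using disjoint distinct by auto
  show "0 \<le> alphaR GA w A" by (rule alphaR_nonneg[OF facts]) (auto simp: verts_GA)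
  show "w (DV c2) \<le> alphaR GA w (A \<union> C)" "w (DV c2) \<le> alphaR GA w (A \<union> {c2})"
    by (rule vertex_le_alphaR[OF facts]; auto simp: verts_GA)+
  show "alphaR GA w (A \<union> C) \<le> alphaR GA w (A \<union> {c1}) + w (DV c2)"
    using alphaR_remove[OF facts, of "A \<union> C" c2] unfolding sets by (simp add: verts_GA)
  show "alphaR GA w (A \<union> {c2}) \<le> alphaR GA w A + w (DV c2)"
    using alphaR_remove[OF facts, of "A \<union> {c2}" c2] unfolding sets by (auto simp: verts_GA)
  show "alphaR GA w (A \<union> {c1}) + w (DV c2) \<le> alphaR GA w (A \<union> C) + alphaR GA w A"
    using alphaR_exchange[OF facts, of "A \<union> {c1}" c2 c1] disjoint distinct unfolding sets
    by (auto simp: verts_GA theta_GX)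
qed

lemma wB_C:
  "w_B (DV c1) = alphaR GA w (A \<union> C) - w (DV c2)"
  "w_B (DV c2) = w (DV c2)"
  "w_B (DO c1 c2) = alphaR GA w (A \<union> {c1}) - alphaR GA w (A \<union> C) + w (DV c2)"
  "w_B (DO c2 c1) = alphaR GA w (A \<union> {c2}) - w (DV c2)"
  "w_B (DU C) = alphaR GA w A"
  using distinct by (simp_all add: wB_def Let_def)

lemma wB_outside_C: "p \<notin> {DV c1, DO c1 c2, DO c2 c1, DU C} \<Longrightarrow> w_B p = w p"
  by (simp add: wB_def Let_def)

lemma weight_fun_wB: "weight_fun GB w_B"
proof -
  have nonneg: "0 \<le> w_B p" if p: "p \<in> Dset GB" for p
  proof (cases "p \<in> {DV c1, DO c1 c2, DO c2 c1, DU C}")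
    case True
    then show ?thesis using alphaR_GA_bounds wB_C by auto
  next
    case False
    have "Dset GB \<subseteq> Dset G" using verts_G by (auto simp: Dset_def binom2_def verts_GB)
    then show ?thesis using weight p wB_outside_C[OF False] by (auto simp: weight_fun_def)
  qed
  have zero: "w_B (DO u v) = 0 \<and> w_B (DO v u) = 0 \<and> w_B (DU {u, v}) = 0"
    if "u \<in> verts G" "v \<in> verts G" "u \<noteq> v" "theta GB u v \<noteq> 0" for u v
  proof -
    have "{u, v} \<noteq> C" "theta G u v \<noteq> 0" using that(4) by (auto simp: theta_GX split: if_splits)
    then show ?thesis using weight that(1-3) wB_outside_C unfolding weight_fun_def
      by (auto simp: doubleton_eq_iff insert_commute)
  qed
  have ordered: "w_B (DO u v) \<le> w_B (DU {u, v})" if "u \<in> verts G" "v \<in> verts G" "u \<noteq> v" for u v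
  proof (cases "{u, v} = C")
    case True
    then have "(u = c1 \<and> v = c2) \<or> (u = c2 \<and> v = c1)" by (auto simp: doubleton_eq_iff)
    then show ?thesis using alphaR_GA_bounds(5,6) wB_C by (auto simp: insert_commute)
  next
    case False
    then show ?thesis using weight that wB_outside_C unfolding weight_fun_def
      by (auto simp: doubleton_eq_iff)
  qed
  have "verts GB \<subseteq> verts G" using verts_G by (auto simp: verts_GB)
  then show ?thesis unfolding weight_fun_def using nonneg zero ordered by blast
qed

lemma setweight_on_wB_C:
  assumes "X \<subseteq> C"
  shows "setweight_on C w_B X = alphaR GA w (A \<union> X)"
proof -
  have "X = {} \<or> X = {c1} \<or> X = {c2} \<or> X = C"
    using assms by (cases "c1 \<in> X"; cases "c2 \<in> X") auto
  then show ?thesis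
    using setweight_on_doubleton[OF distinct, of w_B] wB_C by (auto simp: insert_commute)
qed

lemma setweight_on_wB_diff:
  assumes "S \<subseteq> B \<union> C"
  shows "setweight_on (B \<union> C) w_B S - setweight_on C w_B (S \<inter> C)
       = setweight_on (B \<union> C) w S - setweight_on C w (S \<inter> C)"
proof (rule setweight_on_diff_cong[OF _ _ assms])
  show "finite (B \<union> C)" using finite_GB by (simp add: verts_GB)
  show "w_B (DV u) = w (DV u)" if "u \<in> B \<union> C - C" for u
    using that by (intro wB_outside_C) auto
  show "w_B (DO u v) = w (DO u v)" "w_B (DU {u, v}) = w (DU {u, v})"
    if "\<not> (u \<in> C \<and> v \<in> C)" for u v
    using that by (auto intro!: wB_outside_C simp: doubleton_eq_iff)
qed auto

lemma setweight_split:
  assumes "S \<subseteq> verts G"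
  shows "setweight G w S + setweight_on C w (S \<inter> C)
       = setweight_on (A \<union> C) w (S \<inter> (A \<union> C)) + setweight_on (B \<union> C) w (S \<inter> (B \<union> C))"
proof -
  have "(A \<union> C) \<inter> (B \<union> C) = C" using disjoint by auto
  moreover have "pair_weight w S p = 0"
    if "p \<in> offdiag (verts G)" "\<not> (fst p \<in> A \<union> C \<and> snd p \<in> A \<union> C)"
       "\<not> (fst p \<in> B \<union> C \<and> snd p \<in> B \<union> C)" for p
  proof -
    have "fst p \<in> A \<and> snd p \<in> B \<or> fst p \<in> B \<and> snd p \<in> A"
      using that verts_G by (auto simp: offdiag_def)
    then show ?thesis
    proof
      assume "fst p \<in> A \<and> snd p \<in> B"
      then show ?thesis using cross_weights_zero[of "fst p" "snd p"] by (simp add: pair_weight_def)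
    next
      assume "fst p \<in> B \<and> snd p \<in> A"
      then show ?thesis using cross_weights_zero[of "snd p" "fst p"] by (simp add: pair_weight_def insert_commute)
    qed
  qed
  ultimately show ?thesis
    using setweight_on_split[OF finite_G _ assms, of "A \<union> C" "B \<union> C" w] verts_G
    by (auto simp: setweight_eq_setweight_on Un_ac)
qed

lemma stable_glue:
  assumes "stable G SA" "SA \<subseteq> A \<union> C" "stable G SB" "SB \<subseteq> B \<union> C" "SA \<inter> C = SB \<inter> C"
  shows "stable G (SA \<union> SB)"
proof -
  have "theta G x y \<le> 0" if "x \<in> SA - SB" "y \<in> SB - SA" for x y
  proof -
    have "x \<in> A" "y \<in> B" using that assms(2,4,5) by auto
    then show ?thesis using cut by (simp add: cut_partition_def)
  qed
  then show ?thesis using assms(1,3) unfolding stable_def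
    by (metis Diff_iff Un_iff le_sup_iff theta_commute)
qed

lemma alpha_le_alpha_GB: "alpha G w \<le> alpha GB w_B"
proof -
  obtain S where S: "stable G S" "alpha G w = setweight G w S"
    using alpha_attained[OF finite_G] .
  have "S \<subseteq> verts G" using S(1) by (simp add: stable_def)
  then have "setweight G w S + setweight_on C w (S \<inter> C)
      = setweight_on (A \<union> C) w (S \<inter> (A \<union> C)) + setweight_on (B \<union> C) w (S \<inter> (B \<union> C))"
    by (rule setweight_split)
  moreover have "setweight_on (A \<union> C) w (S \<inter> (A \<union> C)) \<le> alphaR GA w (A \<union> (S \<inter> C))"
    using setweight_le_alphaR[OF finite_GA, of "A \<union> (S \<inter> C)" "S \<inter> (A \<union> C)" w]
      stable_subset[OF S(1)] by (auto simp: stable_GA_iff verts_GA setweight_eq_setweight_on)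
  moreover have "alphaR GA w (A \<union> (S \<inter> C)) = setweight_on C w_B (S \<inter> C)"
    by (rule setweight_on_wB_C[symmetric]) auto
  moreover have "setweight_on (B \<union> C) w_B (S \<inter> (B \<union> C)) - setweight_on C w_B (S \<inter> C)
      = setweight_on (B \<union> C) w (S \<inter> (B \<union> C)) - setweight_on C w (S \<inter> C)"
    using setweight_on_wB_diff[of "S \<inter> (B \<union> C)"] by (simp add: Int_absorb2 Int_assoc)
  moreover have "setweight_on (B \<union> C) w_B (S \<inter> (B \<union> C)) \<le> alpha GB w_B"
    using setweight_le_alpha[OF finite_GB, of "S \<inter> (B \<union> C)" w_B] stable_subset[OF S(1)]
    by (auto simp: stable_GB_iff verts_GB setweight_eq_setweight_on)
  ultimately show ?thesis using S(2) by linarith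
qed

text \<open>Conversely, an optimal \<open>S\<^sub>B\<close> in \<open>(G\<^sub>B,w\<^sub>B)\<close> is completed by an optimal stable set of
  \<open>A \<union> (S\<^sub>B \<inter> C)\<close>; vertices of \<open>C\<close> that this set does not use are dropped from \<open>S\<^sub>B\<close>.\<close>

lemma alpha_GB_le_alpha: "alpha GB w_B \<le> alpha G w"
proof -
  obtain SB where SB: "stable GB SB" "alpha GB w_B = setweight GB w_B SB"
    using alpha_attained[OF finite_GB] .
  have stB: "stable G SB" "SB \<subseteq> B \<union> C" using SB(1) by (simp_all add: stable_GB_iff)
  obtain SA where SA: "stable GA SA" "SA \<subseteq> A \<union> (SB \<inter> C)"
      "alphaR GA w (A \<union> (SB \<inter> C)) = setweight GA w SA"
    using alphaR_attained[OF finite_GA admissible_GA, of "A \<union> (SB \<inter> C)"] by (auto simp: verts_GA)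
  have stA: "stable G SA" "SA \<subseteq> A \<union> C" using SA(1) by (simp_all add: stable_GA_iff)
  define SB' where "SB' = SB - (C - SA)"
  have SB': "SB' \<subseteq> SB" "SB - SB' \<subseteq> C" "SB' \<inter> C = SA \<inter> C"
    using SA(2) disjoint by (auto simp: SB'_def)
  have "setweight_on (B \<union> C) w SB - setweight_on C w (SB \<inter> C)
      \<le> setweight_on (B \<union> C) w SB' - setweight_on C w (SB' \<inter> C)"
    using setweight_on_diff_antimono[OF finite_GB admissible_GB _ _ SB'(1,2)] stB(2)
    by (simp add: verts_GB)
  moreover have "setweight_on (B \<union> C) w_B SB - setweight_on C w_B (SB \<inter> C)
      = setweight_on (B \<union> C) w SB - setweight_on C w (SB \<inter> C)"
    by (rule setweight_on_wB_diff[OF stB(2)])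
  moreover have "setweight_on C w_B (SB \<inter> C) = setweight GA w SA"
    using setweight_on_wB_C[of "SB \<inter> C"] SA(3) by simp
  moreover have "stable G (SA \<union> SB')"
    by (rule stable_glue[OF stA stable_subset[OF stB(1) SB'(1)]]) (use stB(2) SB' in auto)
  then have "setweight G w (SA \<union> SB') \<le> alpha G w" by (rule setweight_le_alpha[OF finite_G])
  moreover have "(SA \<union> SB') \<inter> (A \<union> C) = SA" "(SA \<union> SB') \<inter> (B \<union> C) = SB'"
      "(SA \<union> SB') \<inter> C = SA \<inter> C" "SA \<union> SB' \<subseteq> verts G"
    using stA(2) stB(2) SB' disjoint verts_G by auto
  then have "setweight G w (SA \<union> SB') + setweight_on C w (SA \<inter> C)
      = setweight_on (A \<union> C) w SA + setweight_on (B \<union> C) w SB'"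
    using setweight_split[of "SA \<union> SB'"] by simp
  ultimately show ?thesis
    using SB(2) SB'(3) by (simp add: setweight_eq_setweight_on verts_GA verts_GB)
qed

end

theorem lemma3p11:
  fixes G :: "'a trigraph" and w :: "'a delem \<Rightarrow> int" and A B :: "'a set" and c1 c2 :: 'a
  assumes "is_trigraph G" and "weight_fun G w"
    and "cut_partition G A B {c1, c2}"
    and "c1 \<noteq> c2" and "stable G {c1, c2}"
  shows "weight_fun (GX G B c1 c2) (wB G w A c1 c2)
         \<and> alpha (GX G B c1 c2) (wB G w A c1 c2) = alpha G w"
proof -
  interpret stable_pair_cut G w A B c1 c2
    using assms by unfold_locales
  show ?thesis
    using weight_fun_wB alpha_le_alpha_GB alpha_GB_le_alpha by simp
qed

end
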